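(* Let $d\geq2$, neural network dimensions $\mathbf{N}=(N_L=1,N_{L-1},\dots,N_1,N_0=d)$ with $L\geq2$, $r\in\mathbb{N}$, $\epsilon>0$, $\hat\epsilon\in(0,1/2)$, $\mathcal{R}\in\mathcal{CF}^{\epsilon,\hat\epsilon}_r$, $a\in[1/2,1]$ and $\kappa\in[1/4,3/4]$. For $\delta\geq0$ and $k\in\mathbb{N}$ let $x^{k,\delta}=(a(k+1-\kappa)^{-1},0,\dots,0)\in\mathbb{R}^d$ if $k$ is odd and $x^{k,\delta}=(a(k+1-\kappa)^{-1},\delta,0,\dots,0)$ if $k$ is even, and let $f_a(x)=1$ if $\lceil a/x_1\rceil$ is an odd integer and $f_a(x)=0$ otherwise. Then for any $\delta\in(0,\varepsilon'(r))$ and any $$\phi\in\operatorname{argmin}_{\epsilon,\ \varphi\in\mathcal{NN}_{\mathbf{N},L}}\mathcal{R}\big(\{\varphi(x^{j,\delta})\}_{j=1}^r,\{f_a(x^{j,\delta})\}_{j=1}^r\big)$$ we have $|\phi(x^{k,\delta})-f_a(x^{k,\delta})|\leq\hat\epsilon$ for all $k\in\{1,\dots,r\}$.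
   Context: $\mathcal{NN}_{\mathbf{N},L}$ is the set of maps $\varphi=W^L\rho\cdots\rho W^1:\mathbb{R}^d\to\mathbb{R}$ with affine $W^\ell:\mathbb{R}^{N_{\ell-1}}\to\mathbb{R}^{N_\ell}$ and $\rho(t)=\max\{0,t\}$ coordinatewise. $\mathcal{CF}_r$: all $\mathcal{R}:\mathbb{R}^r\times\mathbb{R}^r\to\mathbb{R}_+\cup\{\infty\}$ with $\mathcal{R}(v,w)=0$ iff $v=w$; $\mathcal{CF}^{\epsilon,\hat\epsilon}_r=\{\mathcal{R}\in\mathcal{CF}_r:\mathcal{R}(v,w)\leq\epsilon\Rightarrow\|v-w\|_\infty\leq\hat\epsilon\}$. $\operatorname{argmin}_{\epsilon,\,x\in X}g(x)=\{x\in X:g(x)\leq g(y)+\epsilon\ \forall y\in X\}$. $\varepsilon'(n)=[(4n+3)(4n+4)]^{-1}$. *)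

theory Defs
  imports "HOL-Analysis.Analysis"
begin

text \<open>Vectors in R^n are represented as functions nat => real, coordinates 0..n-1
  (coordinate i corresponds to the paper's coordinate i+1).
  Network dimensions N = (N_0 = d, N_1, ..., N_L = 1) are a list of length L+1,
  N ! l = N_l. Parameters P l = (W, b) give the affine map of layer l (1 <= l <= L):
  (W^l x)_i = sum_{j < N_(l-1)} W i j * x j + b i  for i < N_l.\<close>

definition relu :: "real \<Rightarrow> real" where
  "relu t = max 0 t"

definition affine_layer ::
  "nat list \<Rightarrow> (nat \<Rightarrow> (nat \<Rightarrow> nat \<Rightarrow> real) \<times> (nat \<Rightarrow> real)) \<Rightarrow> nat \<Rightarrow> (nat \<Rightarrow> real) \<Rightarrow> (nat \<Rightarrow> real)"
where
  "affine_layer N P l x = (\<lambda>i. if i < N ! l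
      then (\<Sum>j<N ! (l - 1). fst (P l) i j * x j) + snd (P l) i else 0)"

fun nn_hidden ::
  "nat list \<Rightarrow> (nat \<Rightarrow> (nat \<Rightarrow> nat \<Rightarrow> real) \<times> (nat \<Rightarrow> real)) \<Rightarrow> nat \<Rightarrow> (nat \<Rightarrow> real) \<Rightarrow> (nat \<Rightarrow> real)"
where
  "nn_hidden N P 0 x = (\<lambda>i. if i < N ! 0 then x i else 0)"
| "nn_hidden N P (Suc l) x = (\<lambda>i. relu (affine_layer N P (Suc l) (nn_hidden N P l x) i))"

definition nn_eval ::
  "nat list \<Rightarrow> nat \<Rightarrow> (nat \<Rightarrow> (nat \<Rightarrow> nat \<Rightarrow> real) \<times> (nat \<Rightarrow> real)) \<Rightarrow> (nat \<Rightarrow> real) \<Rightarrow> real"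
where
  "nn_eval N L P x = affine_layer N P L (nn_hidden N P (L - 1) x) 0"

definition NN :: "nat list \<Rightarrow> nat \<Rightarrow> ((nat \<Rightarrow> real) \<Rightarrow> real) set" where
  "NN N L = {\<phi>. \<exists>P. \<phi> = nn_eval N L P}"

definition CF :: "nat \<Rightarrow> (real list \<Rightarrow> real list \<Rightarrow> ennreal) \<Rightarrow> bool" where
  "CF r R \<longleftrightarrow> (\<forall>v w. length v = r \<longrightarrow> length w = r \<longrightarrow> (R v w = 0 \<longleftrightarrow> v = w))"

definition CF_eps :: "nat \<Rightarrow> real \<Rightarrow> real \<Rightarrow> (real list \<Rightarrow> real list \<Rightarrow> ennreal) \<Rightarrow> bool" where
  "CF_eps r \<epsilon> \<epsilon>' R \<longleftrightarrow> CF r R \<and>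
     (\<forall>v w. length v = r \<longrightarrow> length w = r \<longrightarrow> R v w \<le> ennreal \<epsilon> \<longrightarrow>
        (\<forall>i<r. \<bar>v ! i - w ! i\<bar> \<le> \<epsilon>'))"

definition argmin_eps :: "real \<Rightarrow> 'a set \<Rightarrow> ('a \<Rightarrow> ennreal) \<Rightarrow> 'a set" where
  "argmin_eps \<epsilon> X g = {x \<in> X. \<forall>y\<in>X. g x \<le> g y + ennreal \<epsilon>}"

definition eps_prime :: "nat \<Rightarrow> real" where
  "eps_prime n = 1 / ((4 * real n + 3) * (4 * real n + 4))"

definition xpt :: "real \<Rightarrow> real \<Rightarrow> nat \<Rightarrow> real \<Rightarrow> (nat \<Rightarrow> real)" where
  "xpt a \<kappa> k \<delta> = (\<lambda>i. if i = 0 then a / (real k + 1 - \<kappa>)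
                        else if i = 1 \<and> even k then \<delta> else 0)"

definition f_a :: "real \<Rightarrow> (nat \<Rightarrow> real) \<Rightarrow> real" where
  "f_a a x = (if odd (\<lceil>a / x 0\<rceil>) then 1 else 0)"

end

theory Submission
  imports Defs
begin

text \<open>A single ReLU neuron carried unchanged through the hidden layers (ReLU is idempotent)
  realises x \<mapsto> relu (x 1) / \<delta>. It equals 1 at the points with even k, whose second
  coordinate is \<delta>, and 0 at those with odd k, whose second coordinate is 0. Since
  a / x 0 = k + 1 - \<kappa> has ceiling k + 1 there, these are exactly the labels f_a. Hence some
  network has cost 0, every \<epsilon>-minimiser has cost at most \<epsilon>, and the defining property of
  CF_eps gives the bound.\<close>

lemma argmin_eps_close_to_targets:
  fixes x :: "'b \<Rightarrow> 'a" and y :: "'b \<Rightarrow> real"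
  assumes "CF_eps r \<epsilon> \<epsilon>' R" and "length js = r"
    and "\<phi> \<in> argmin_eps \<epsilon> X (\<lambda>\<psi>. R (map (\<lambda>j. \<psi> (x j)) js) (map y js))"
    and "\<psi> \<in> X" and "\<forall>j\<in>set js. \<psi> (x j) = y j"
  shows "\<forall>j\<in>set js. \<bar>\<phi> (x j) - y j\<bar> \<le> \<epsilon>'"
proof
  fix j assume "j \<in> set js"
  then obtain i where i: "i < r" "js ! i = j"
    using assms(2) by (auto simp: in_set_conv_nth)
  have "map (\<lambda>j. \<psi> (x j)) js = map y js"
    using assms(5) by simp
  then have "R (map (\<lambda>j. \<psi> (x j)) js) (map y js) = 0"
    using assms(1,2) by (simp add: CF_eps_def CF_def)
  then have "R (map (\<lambda>j. \<phi> (x j)) js) (map y js) \<le> ennreal \<epsilon>"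
    using assms(3,4) unfolding argmin_eps_def by force
  then have "\<forall>i<r. \<bar>map (\<lambda>j. \<phi> (x j)) js ! i - map y js ! i\<bar> \<le> \<epsilon>'"
    using assms(1,2) unfolding CF_eps_def by (metis length_map)
  then have "\<bar>map (\<lambda>j. \<phi> (x j)) js ! i - map y js ! i\<bar> \<le> \<epsilon>'"
    using i(1) by blast
  then show "\<bar>\<phi> (x j) - y j\<bar> \<le> \<epsilon>'"
    using assms(2) i by simp
qed

definition relu_coord_params ::
  "nat \<Rightarrow> nat \<Rightarrow> real \<Rightarrow> nat \<Rightarrow> (nat \<Rightarrow> nat \<Rightarrow> real) \<times> (nat \<Rightarrow> real)"
where
  "relu_coord_params L i c l =
     ((\<lambda>p q. if p = 0 \<and> q = (if l = 1 then i else 0) then (if l = L then c else 1) else 0),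
      (\<lambda>_. 0))"

lemma affine_layer_relu_coord_params:
  assumes "0 < N ! l" and "(if l = 1 then i else 0) < N ! (l - 1)"
  shows "affine_layer N (relu_coord_params L i c) l y 0
           = (if l = L then c else 1) * y (if l = 1 then i else 0)"
  using assms by (simp add: affine_layer_def relu_coord_params_def if_distrib[where f="\<lambda>t. t * _"]
                   sum.delta cong: if_cong)

lemma nn_hidden_relu_coord_params:
  assumes "i < N ! 0" and "\<forall>l\<le>L. 0 < N ! l" and "1 \<le> l" and "l < L"
  shows "nn_hidden N (relu_coord_params L i c) l x 0 = relu (x i)"
  using assms(3,4)
proof (induction l rule: dec_induct)
  case base
  then show ?case
    using assms(1,2) by (simp add: affine_layer_relu_coord_params)
next
  case (step l)
  then have "nn_hidden N (relu_coord_params L i c) (Suc l) x 0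
               = relu (nn_hidden N (relu_coord_params L i c) l x 0)"
    using assms(2) by (simp add: affine_layer_relu_coord_params)
  with step show ?case
    by (simp add: relu_def)
qed

lemma relu_coord_in_NN:
  assumes "2 \<le> L" and "i < N ! 0" and "\<forall>l\<le>L. 0 < N ! l"
  shows "(\<lambda>x. c * relu (x i)) \<in> NN N L"
proof -
  have "nn_eval N L (relu_coord_params L i c) x = c * relu (x i)" for x
    using assms nn_hidden_relu_coord_params[OF assms(2,3), of "L - 1"]
    by (simp add: nn_eval_def affine_layer_relu_coord_params)
  then show ?thesis
    unfolding NN_def by (auto intro!: exI[of _ "relu_coord_params L i c"])
qed

lemma f_a_xpt:
  assumes "a \<noteq> 0" and "0 \<le> \<kappa>" and "\<kappa> < 1"
  shows "f_a a (xpt a \<kappa> k \<delta>) = (if even k then 1 else 0)"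
proof -
  have "\<lceil>a / (a / (real k + 1 - \<kappa>))\<rceil> = int k + 1"
    using assms by (simp add: ceiling_eq_iff)
  then show ?thesis
    by (simp add: f_a_def xpt_def)
qed

lemma relu_xpt_second_coord:
  assumes "0 < \<delta>"
  shows "1 / \<delta> * relu (xpt a \<kappa> k \<delta> 1) = (if even k then 1 else 0)"
  using assms by (simp add: xpt_def relu_def)

theorem lemma5p27:
  fixes d L r :: nat and N :: "nat list" and \<epsilon> \<epsilon>' a \<kappa> \<delta> :: real
    and R :: "real list \<Rightarrow> real list \<Rightarrow> ennreal" and \<phi> :: "(nat \<Rightarrow> real) \<Rightarrow> real"
  assumes "d \<ge> 2" and "L \<ge> 2"
    and "length N = L + 1" and "N ! 0 = d" and "N ! L = 1" and "\<forall>l\<le>L. N ! l \<ge> 1"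
    and "\<epsilon> > 0" and "0 < \<epsilon>'" and "\<epsilon>' < 1/2"
    and "CF_eps r \<epsilon> \<epsilon>' R"
    and "1/2 \<le> a" and "a \<le> 1" and "1/4 \<le> \<kappa>" and "\<kappa> \<le> 3/4"
    and "0 < \<delta>" and "\<delta> < eps_prime r"
    and "\<phi> \<in> argmin_eps \<epsilon> (NN N L)
           (\<lambda>\<psi>. R (map (\<lambda>j. \<psi> (xpt a \<kappa> j \<delta>)) [1..<r+1])
                   (map (\<lambda>j. f_a a (xpt a \<kappa> j \<delta>)) [1..<r+1]))"
  shows "\<forall>k\<in>{1..r}. \<bar>\<phi> (xpt a \<kappa> k \<delta>) - f_a a (xpt a \<kappa> k \<delta>)\<bar> \<le> \<epsilon>'"
proof -
  let ?\<psi> = "\<lambda>x. 1 / \<delta> * relu (x 1)"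
  have "?\<psi> \<in> NN N L"
    using assms(1,2,4,6) by (intro relu_coord_in_NN) auto
  moreover have "\<forall>j. ?\<psi> (xpt a \<kappa> j \<delta>) = f_a a (xpt a \<kappa> j \<delta>)"
    unfolding relu_xpt_second_coord[OF assms(15)] using assms(11,13,14) by (simp add: f_a_xpt)
  ultimately have "\<forall>j\<in>set [1..<r+1]. \<bar>\<phi> (xpt a \<kappa> j \<delta>) - f_a a (xpt a \<kappa> j \<delta>)\<bar> \<le> \<epsilon>'"
    using argmin_eps_close_to_targets[OF assms(10) _ assms(17)] by simp
  then show ?thesis
    by auto
qed

end
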